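(* Let $g,h,K$ be parameters and let $a,b,c,d$ be generators of an associative algebra over $\mathbb{C}$ (extended by the parameters) subject to the relations $$ca=ac-gc^2,\quad cb=bc-gdc-hac+ghc^2,\quad cd=dc-hc^2,\quad da=ad-gdc+hac,$$ $$db=bd+g(ad-bc+hac-d^2),\quad ba=ab-h(ad-bc+hac-a^2).$$ Let $T=\begin{pmatrix} a&b\\ c&d\end{pmatrix}$ and $$\hat R(K;g,h)=\begin{pmatrix}1&-hK&hK&ghK\\0&1-K&K&gK\\0&K&1-K&-gK\\0&0&0&1\end{pmatrix},\qquad R=P\hat R(K;g,h).$$ Then for every value of $K$, $$R\,T_1T_2=T_2T_1\,R .$$
   Context: All $4\times4$ matrices are written in the ordered basis $e_1\otimes e_1,\ e_1\otimes e_2,\ e_2\otimes e_1,\ e_2\otimes e_2$ of $\mathbb{C}^2\otimes\mathbb{C}^2$, with double indices $(ij)$ ordered $11,12,21,22$. $P$ is the permutation (flip) matrix, i.e. the $4\times4$ matrix that swaps the second and third basis vectors. $T_1=T\otimes I_2$ and $T_2=I_2\otimes T$, so $T_1T_2$ has entries $(T_1T_2)_{(ij),(kl)}=T_{ik}T_{jl}$ and $T_2T_1$ has entries $(T_2T_1)_{(ij),(kl)}=T_{jl}T_{ik}$ (the entries of $T$ do not commute, so the order of factors matters). The equality is an equality of $4\times 4$ matrices with entries in the algebra. *)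

theory Defs
  imports "Jordan_Normal_Form.Matrix"
begin

text \<open>Basis index n in {0..3} encodes the double index (i,j) in {1,2}x{1,2},
  ordered 11,12,21,22: first component n div 2, second n mod 2 (0-based).\<close>

definition Tmat :: "'a \<Rightarrow> 'a \<Rightarrow> 'a \<Rightarrow> 'a \<Rightarrow> nat \<Rightarrow> nat \<Rightarrow> 'a" where
  "Tmat a b c d i k = (if i = 0 then (if k = 0 then a else b) else (if k = 0 then c else d))"

text \<open>(T1 T2)_{(ij),(kl)} = T_ik T_jl\<close>
definition T1T2 :: "'a::ring_1 \<Rightarrow> 'a \<Rightarrow> 'a \<Rightarrow> 'a \<Rightarrow> 'a mat" where
  "T1T2 a b c d = mat 4 4 (\<lambda>(p,q).
     Tmat a b c d (p div 2) (q div 2) * Tmat a b c d (p mod 2) (q mod 2))"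

text \<open>(T2 T1)_{(ij),(kl)} = T_jl T_ik\<close>
definition T2T1 :: "'a::ring_1 \<Rightarrow> 'a \<Rightarrow> 'a \<Rightarrow> 'a \<Rightarrow> 'a mat" where
  "T2T1 a b c d = mat 4 4 (\<lambda>(p,q).
     Tmat a b c d (p mod 2) (q mod 2) * Tmat a b c d (p div 2) (q div 2))"

definition Pflip :: "'a::ring_1 mat" where
  "Pflip = mat_of_rows_list 4 [[1,0,0,0],[0,0,1,0],[0,1,0,0],[0,0,0,1]]"

definition Rhat :: "'a::ring_1 \<Rightarrow> 'a \<Rightarrow> 'a \<Rightarrow> 'a mat" where
  "Rhat K g h = mat_of_rows_list 4
     [[1, - (h*K), h*K, g*h*K],
      [0, 1 - K, K, g*K],
      [0, K, 1 - K, - (g*K)],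
      [0, 0, 0, 1]]"

definition Rmat :: "'a::ring_1 \<Rightarrow> 'a \<Rightarrow> 'a \<Rightarrow> 'a mat" where
  "Rmat K g h = Pflip * Rhat K g h"

end

theory Submission
  imports Defs
begin

text \<open>Since \<open>T\<^sub>2T\<^sub>1 P = P T\<^sub>1T\<^sub>2\<close>, the claim amounts to \<open>Rhat\<close> commuting with
  \<open>T\<^sub>1T\<^sub>2\<close>. Now \<open>Rhat = 1 + K u v\<^sup>T\<close> with \<open>u = (h, 1, -1, 0)\<^sup>T\<close> and
  \<open>v = (0, -1, 1, g)\<close>, and \<open>v\<close> is a left and \<open>u\<close> a right eigenvector of \<open>T\<^sub>1T\<^sub>2\<close> for
  the same eigenvalue, the quantum determinant \<open>D = ad - bc + hac\<close>. Hence
  \<open>u K v T\<^sub>1T\<^sub>2 = u K D v = u D K v = T\<^sub>1T\<^sub>2 u K v\<close>. Each of the eight eigenvector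
  equations is one of the defining relations or a combination of two or three of them.\<close>

lemma one_plus_intertwined_commute:
  fixes A :: "'a::semiring_1 mat"
  assumes carriers: "A \<in> carrier_mat n n" "U \<in> carrier_mat n k" "M \<in> carrier_mat k k"
      "V \<in> carrier_mat k n" "L \<in> carrier_mat k k"
    and left_eigen: "V * A = L * V" and right_eigen: "A * U = U * L" and comm: "M * L = L * M"
  shows "(1\<^sub>m n + U * M * V) * A = A * (1\<^sub>m n + U * M * V)"
proof -
  have UM: "U * M \<in> carrier_mat n k"
    using carriers by simp
  have "U * M * V * A = U * M * (L * V)"
    by (simp add: assoc_mult_mat[OF UM carriers(4,1)] left_eigen)
  also have "\<dots> = U * (L * M) * V"
    by (metis assoc_mult_mat[OF UM carriers(5,4)] assoc_mult_mat[OF carriers(2,3,5)] comm)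
  also have "\<dots> = A * (U * M * V)"
    by (metis assoc_mult_mat[OF carriers(2,5,3)] assoc_mult_mat[OF carriers(1,2,3)]
        assoc_mult_mat[OF carriers(1) UM carriers(4)] right_eigen)
  finally have "U * M * V * A = A * (U * M * V)" .
  moreover have N: "U * M * V \<in> carrier_mat n n"
    using UM carriers by simp
  ultimately show ?thesis
    using carriers(1) add_mult_distrib_mat[OF one_carrier_mat N carriers(1)]
      mult_add_distrib_mat[OF carriers(1) one_carrier_mat N]
    by simp
qed

lemma less_4_cases:
  assumes "j < (4::nat)"
  obtains "j = 0" | "j = 1" | "j = 2" | "j = 3"
  using assms by linarith

lemma sum_lessThan_4: "(\<Sum>i<(4::nat). f i) = f 0 + f 1 + f 2 + f 3"
  by (simp add: numeral_eq_Suc add.assoc)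

lemma mat_of_rows_list_carrier [simp]:
  "length rs = m \<Longrightarrow> mat_of_rows_list n rs \<in> carrier_mat m n"
  by (simp add: mat_of_rows_list_def)

lemma mat_of_cols_list_carrier [simp]:
  "length cs = m \<Longrightarrow> mat_of_cols_list n cs \<in> carrier_mat n m"
  by (simp add: mat_of_cols_list_def)

lemma carrier_mat_4_4 [simp]:
  "T1T2 a b c d \<in> carrier_mat 4 4" "T2T1 a b c d \<in> carrier_mat 4 4"
  "Pflip \<in> carrier_mat 4 4" "Rhat K g h \<in> carrier_mat 4 4"
  by (simp_all add: T1T2_def T2T1_def Pflip_def Rhat_def)

lemma eq_mat_4_4I:
  assumes "dim_row A = 4" "dim_col A = 4" "dim_row B = 4" "dim_col B = 4"
    and "\<And>i j. i < 4 \<Longrightarrow> j < 4 \<Longrightarrow> A $$ (i, j) = B $$ (i, j)"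
  shows "A = B"
  using assms by (intro eq_matI) auto

lemma T2T1_mult_Pflip: "T2T1 a b c d * Pflip = Pflip * T1T2 a b c d"
proof (rule eq_mat_4_4I)
  fix i j :: nat
  assume "i < 4" "j < 4"
  then show "(T2T1 a b c d * Pflip) $$ (i, j) = (Pflip * T1T2 a b c d) $$ (i, j)"
    by (elim less_4_cases)
      (simp_all add: T1T2_def T2T1_def Pflip_def mat_of_rows_list_def scalar_prod_def
        atLeast0LessThan sum_lessThan_4 Tmat_def)
qed (simp_all add: T1T2_def T2T1_def Pflip_def mat_of_rows_list_def)

lemma Rhat_eq_one_plus_rank_one:
  fixes g h K :: "'a::ring_1"
  assumes "g * h = h * g" "g * K = K * g"
  shows "Rhat K g h = 1\<^sub>m 4 + mat_of_cols_list 4 [[h, 1, -1, 0]] * mat_of_rows_list 1 [[K]]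
      * mat_of_rows_list 4 [[0, -1, 1, g]]"
proof (rule eq_mat_4_4I)
  fix i j :: nat
  assume "i < 4" "j < 4"
  then show "Rhat K g h $$ (i, j) = (1\<^sub>m 4 + mat_of_cols_list 4 [[h, 1, -1, 0]]
      * mat_of_rows_list 1 [[K]] * mat_of_rows_list 4 [[0, -1, 1, g]]) $$ (i, j)"
    by (elim less_4_cases)
      (simp_all add: Rhat_def mat_of_rows_list_def mat_of_cols_list_def scalar_prod_def
        assms mult.assoc)
qed (simp_all add: Rhat_def mat_of_rows_list_def mat_of_cols_list_def)

definition qdet :: "'a::ring_1 \<Rightarrow> 'a \<Rightarrow> 'a \<Rightarrow> 'a \<Rightarrow> 'a \<Rightarrow> 'a" where
  "qdet h a b c d = a*d - b*c + h*a*c"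

lemma T1T2_left_eigenvector:
  fixes a b c d g h :: "'a::ring_1"
  assumes g: "\<And>x. g * x = x * g"
    and r1: "c*a = a*c - g*c^2"
    and r2: "c*b = b*c - g*d*c - h*a*c + g*h*c^2"
    and r3: "c*d = d*c - h*c^2"
    and r4: "d*a = a*d - g*d*c + h*a*c"
    and r5: "d*b = b*d + g*(a*d - b*c + h*a*c - d^2)"
  shows "mat_of_rows_list 4 [[0, -1, 1, g]] * T1T2 a b c d
       = mat_of_rows_list 1 [[qdet h a b c d]] * mat_of_rows_list 4 [[0, -1, 1, g]]"
proof -
  have "c*a - a*c + g*(c*c) = 0"
    using r1 by (simp add: power2_eq_square)
  moreover have "c*b - a*d + g*(c*d) = - qdet h a b c d"
    by (simp add: r2 r3 qdet_def algebra_simps power2_eq_square)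
  moreover have "d*a - b*c + g*(d*c) = qdet h a b c d"
    using r4 by (simp add: qdet_def algebra_simps)
  moreover have "d*b - b*d + g*(d*d) = g * qdet h a b c d"
    using r5 by (simp add: qdet_def algebra_simps power2_eq_square)
  then have "d*b - b*d + g*(d*d) = qdet h a b c d * g"
    by (simp add: g)
  ultimately show ?thesis
    by (intro eq_matI; simp add: T1T2_def mat_of_rows_list_def; elim less_4_cases)
      (simp_all add: scalar_prod_def atLeast0LessThan sum_lessThan_4 Tmat_def)
qed

lemma T1T2_right_eigenvector:
  fixes a b c d g h :: "'a::ring_1"
  assumes h: "\<And>x. h * x = x * h"
    and r1: "c*a = a*c - g*c^2"
    and r2: "c*b = b*c - g*d*c - h*a*c + g*h*c^2"
    and r3: "c*d = d*c - h*c^2"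
    and r4: "d*a = a*d - g*d*c + h*a*c"
    and r6: "b*a = a*b - h*(a*d - b*c + h*a*c - a^2)"
  shows "T1T2 a b c d * mat_of_cols_list 4 [[h, 1, -1, 0]]
       = mat_of_cols_list 4 [[h, 1, -1, 0]] * mat_of_rows_list 1 [[qdet h a b c d]]"
proof -
  have gh: "g * (h * x) = h * (g * x)" for x
    by (metis h mult.assoc)
  have "a*a*h + a*b - b*a = h * qdet h a b c d"
    using r6 h[of "a*a"] by (simp add: qdet_def algebra_simps power2_eq_square)
  moreover have "a*c*h + a*d - b*c = qdet h a b c d"
    using h[of "a*c"] by (simp add: qdet_def algebra_simps)
  moreover have "h*(c*a) + c*b - d*a = - qdet h a b c d"
    using gh by (simp add: r1 r2 r4 qdet_def algebra_simps power2_eq_square)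
  then have "c*a*h + c*b - d*a = - qdet h a b c d"
    by (simp add: h)
  moreover have "c*c*h + c*d = d*c"
    using h[of "c*c"] by (simp add: r3 algebra_simps power2_eq_square)
  ultimately show ?thesis
    by (intro eq_matI; simp add: T1T2_def mat_of_rows_list_def mat_of_cols_list_def;
        elim less_4_cases)
      (simp_all add: scalar_prod_def atLeast0LessThan sum_lessThan_4 Tmat_def)
qed

lemma Rhat_T1T2_commute:
  fixes a b c d g h K :: "'a::ring_1"
  assumes central: "\<And>x. g * x = x * g" "\<And>x. h * x = x * h" "\<And>x. K * x = x * K"
    and r1: "c*a = a*c - g*c^2"
    and r2: "c*b = b*c - g*d*c - h*a*c + g*h*c^2"
    and r3: "c*d = d*c - h*c^2"
    and r4: "d*a = a*d - g*d*c + h*a*c"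
    and r5: "d*b = b*d + g*(a*d - b*c + h*a*c - d^2)"
    and r6: "b*a = a*b - h*(a*d - b*c + h*a*c - a^2)"
  shows "Rhat K g h * T1T2 a b c d = T1T2 a b c d * Rhat K g h"
proof -
  have KD: "mat_of_rows_list 1 [[K]] * mat_of_rows_list 1 [[qdet h a b c d]]
      = mat_of_rows_list 1 [[qdet h a b c d]] * mat_of_rows_list 1 [[K]]"
    by (intro eq_matI) (simp_all add: mat_of_rows_list_def scalar_prod_def central(3))
  show ?thesis
    unfolding Rhat_eq_one_plus_rank_one[OF central(1) central(1)]
    by (rule one_plus_intertwined_commute[where k = 1, OF _ _ _ _ _
          T1T2_left_eigenvector[OF central(1) r1 r2 r3 r4 r5]
          T1T2_right_eigenvector[OF central(2) r1 r2 r3 r4 r6] KD])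
      simp_all
qed

theorem mainTheorem2:
  fixes a b c d g h K :: "'a::ring_1"
  assumes central: "\<And>x. g * x = x * g" "\<And>x. h * x = x * h" "\<And>x. K * x = x * K"
    and r1: "c*a = a*c - g*c^2"
    and r2: "c*b = b*c - g*d*c - h*a*c + g*h*c^2"
    and r3: "c*d = d*c - h*c^2"
    and r4: "d*a = a*d - g*d*c + h*a*c"
    and r5: "d*b = b*d + g*(a*d - b*c + h*a*c - d^2)"
    and r6: "b*a = a*b - h*(a*d - b*c + h*a*c - a^2)"
  shows "Rmat K g h * T1T2 a b c d = T2T1 a b c d * Rmat K g h"
proof -
  note assoc = assoc_mult_mat[of _ 4 4 _ 4 _ 4]
  have "Rmat K g h * T1T2 a b c d = Pflip * (Rhat K g h * T1T2 a b c d)"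
    by (simp add: Rmat_def assoc)
  also have "\<dots> = Pflip * (T1T2 a b c d * Rhat K g h)"
    using Rhat_T1T2_commute[OF central r1 r2 r3 r4 r5 r6] by simp
  also have "\<dots> = Pflip * T1T2 a b c d * Rhat K g h"
    by (simp add: assoc)
  also have "\<dots> = T2T1 a b c d * Pflip * Rhat K g h"
    by (simp only: T2T1_mult_Pflip)
  also have "\<dots> = T2T1 a b c d * Rmat K g h"
    by (simp add: Rmat_def assoc)
  finally show ?thesis .
qed

end
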